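(* Let $0<a,b<1$, let $f\ge3$ be an integer, and let $\overline w_{m,n}$ ($m,n\ge0$, $m\ne n$) be as defined in the context. For $0\le m\le n-2$ put $[\overline w]_{m,n}:=\overline w_{m,n}\overline w_{m+1,n+1}-\overline w_{m,n+1}\overline w_{m+1,n}$. Then (with all indices nonnegative): 1. $[\overline w]_{f-\ell,f+j}=a^2r^2z^4(1-a)(1-b)x_a^{\ell-2}x(a,b)x_b^{j-1}$ for $\ell\ge2$, $j\ge1$; 2. $[\overline w]_{f-\ell,f}=a^2r^2z^4(1-a)(1-b)x_a^{\ell-2}$ for $\ell\ge2$; 3. $[\overline w]_{f-1,f+j}=b^2r^2z^4(1-a)(1-b)x_b^{j-1}$ for $j\ge1$; 4. $[\overline w]_{m,m+\ell}=a^2r^2z^4(1-a)^2x_a^{\ell-2}$ for $\ell\ge2$, $m+\ell\le f-1$; 5. $[\overline w]_{m,m+j}=b^2r^2z^4(1-b)^2x_b^{j-2}$ for $f\le m$, $j\ge2$.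
   Context: Let $r,y,z$ be indeterminates. For $c\in(0,1)$: $\omega_c:=1-(1-c)^2r^2y^2z^2$, $\tau_c:=1+(1-c)^2r^2z^2y(1-y)$, $x_c:=c^2z^2\tau_c^2$, $\beta_c:=1+z^2(c^2-(1-c)^2r^2(y^2+c^2(1-y)^2z^2))$; $w^*_0(c):=(\beta_c-\omega_c)/x_c$, $w^*_1(c):=1$, $w^*_{n+1}(c):=\beta_cw^*_n(c)-x_cw^*_{n-1}(c)$ ($n\ge1$). Also $\omega(a,b):=1-(1-a)(1-b)r^2y^2z^2$, $\tau(a,b):=1+(1-a)(1-b)r^2z^2y(1-y)$, $x(a,b):=b^2z^2\tau(a,b)^2$, $x(b,a):=a^2z^2\tau(a,b)^2$, $\beta(a,b):=\beta_b-(b-a)b^2(1-b)r^2(1-y)^2z^4$, $\beta(b,a):=\beta_a-(a-b)a^2(1-a)r^2(1-y)^2z^4$. Define $\overline w_{m,m+1}=\overline w_{m+1,m}:=1$ for $m\ge0$, and for $n-m\ge2$ (all indices $\ge0$): upward: (U1) $\overline w_{m,m+\ell}:=w^*_\ell(a)$ if $m+\ell\le f$, and $:=w^*_\ell(b)$ if $f\le m$; (U2) $\overline w_{f-\ell,f+1}:=\frac{1-b}{1-a}w^*_{\ell+1}(a)+\frac{b-a}{1-a}w^*_\ell(a)$, $1\le\ell\le f$; (U3) $\overline w_{m,f+2}:=\beta(a,b)\overline w_{m,f+1}-x(a,b)\overline w_{m,f}$, $m\le f-1$; (U4) $\overline w_{m,f+j+1}:=\beta_b\overline w_{m,f+j}-x_b\overline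 w_{m,f+j-1}$, $m\le f-1$, $j\ge2$. Downward: (D1) $\overline w_{m+\ell,m}:=w^*_\ell(a)$ if $m+\ell\le f-1$, and $:=w^*_\ell(b)$ if $f-1\le m$; (D2) $\overline w_{f+j,f-2}:=\frac{1-a}{1-b}w^*_{j+2}(b)+\frac{a-b}{1-b}w^*_{j+1}(b)$, $j\ge0$; (D3) $\overline w_{n,f-3}:=\beta(b,a)\overline w_{n,f-2}-x(b,a)\overline w_{n,f-1}$, $n\ge f$; (D4) $\overline w_{n,f-\ell-2}:=\beta_a\overline w_{n,f-\ell-1}-x_a\overline w_{n,f-\ell}$, $n\ge f$, $\ell\ge2$. (In particular $\overline w_{f-1,f+1}=\omega(a,b)=\overline w_{f,f-2}$.) *)

theory Defs
  imports Complex_Main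
begin

(* The indeterminates r, y, z are modelled as arbitrary real numbers. *)

definition omc :: "real \<Rightarrow> real \<Rightarrow> real \<Rightarrow> real \<Rightarrow> real" where
  "omc c r y z = 1 - (1-c)^2 * r^2 * y^2 * z^2"

definition tauc :: "real \<Rightarrow> real \<Rightarrow> real \<Rightarrow> real \<Rightarrow> real" where
  "tauc c r y z = 1 + (1-c)^2 * r^2 * z^2 * y * (1-y)"

definition xc :: "real \<Rightarrow> real \<Rightarrow> real \<Rightarrow> real \<Rightarrow> real" where
  "xc c r y z = c^2 * z^2 * (tauc c r y z)^2"

definition betac :: "real \<Rightarrow> real \<Rightarrow> real \<Rightarrow> real \<Rightarrow> real" where
  "betac c r y z = 1 + z^2 * (c^2 - (1-c)^2 * r^2 * (y^2 + c^2 * (1-y)^2 * z^2))"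

fun wstar :: "real \<Rightarrow> real \<Rightarrow> real \<Rightarrow> real \<Rightarrow> nat \<Rightarrow> real" where
  "wstar c r y z 0 = (betac c r y z - omc c r y z) / xc c r y z"
| "wstar c r y z (Suc 0) = 1"
| "wstar c r y z (Suc (Suc n)) =
     betac c r y z * wstar c r y z (Suc n) - xc c r y z * wstar c r y z n"

definition om2 :: "real \<Rightarrow> real \<Rightarrow> real \<Rightarrow> real \<Rightarrow> real \<Rightarrow> real" where
  "om2 a b r y z = 1 - (1-a) * (1-b) * r^2 * y^2 * z^2"

definition tau2 :: "real \<Rightarrow> real \<Rightarrow> real \<Rightarrow> real \<Rightarrow> real \<Rightarrow> real" where
  "tau2 a b r y z = 1 + (1-a) * (1-b) * r^2 * z^2 * y * (1-y)"

definition xab :: "real \<Rightarrow> real \<Rightarrow> real \<Rightarrow> real \<Rightarrow> real \<Rightarrow> real" where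
  "xab a b r y z = b^2 * z^2 * (tau2 a b r y z)^2"

definition xba :: "real \<Rightarrow> real \<Rightarrow> real \<Rightarrow> real \<Rightarrow> real \<Rightarrow> real" where
  "xba a b r y z = a^2 * z^2 * (tau2 a b r y z)^2"

definition betaab :: "real \<Rightarrow> real \<Rightarrow> real \<Rightarrow> real \<Rightarrow> real \<Rightarrow> real" where
  "betaab a b r y z = betac b r y z - (b-a) * b^2 * (1-b) * r^2 * (1-y)^2 * z^4"

definition betaba :: "real \<Rightarrow> real \<Rightarrow> real \<Rightarrow> real \<Rightarrow> real \<Rightarrow> real" where
  "betaba a b r y z = betac a r y z - (a-b) * a^2 * (1-a) * r^2 * (1-y)^2 * z^4"

text \<open>Upward entries: upc ... m k = wbar_{m, f+1+k} for m \<le> f-1 (rules U2, U3, U4).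
  Note wbar_{m,f} = w*_{f-m}(a) (rule U1, or = 1 = w*_1 when m = f-1).\<close>
fun upc :: "real \<Rightarrow> real \<Rightarrow> nat \<Rightarrow> real \<Rightarrow> real \<Rightarrow> real \<Rightarrow> nat \<Rightarrow> nat \<Rightarrow> real" where
  "upc a b f r y z m 0 =
     (1-b)/(1-a) * wstar a r y z (f-m+1) + (b-a)/(1-a) * wstar a r y z (f-m)"
| "upc a b f r y z m (Suc 0) =
     betaab a b r y z * upc a b f r y z m 0
     - xab a b r y z * (if m + 1 = f then 1 else wstar a r y z (f-m))"
| "upc a b f r y z m (Suc (Suc k)) =
     betac b r y z * upc a b f r y z m (Suc k) - xc b r y z * upc a b f r y z m k"

text \<open>Downward entries: downc ... p k = wbar_{p, f-2-k} for p \<ge> f (rules D2, D3, D4).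
  Note wbar_{p,f-1} = w*_{p-f+1}(b) (rule D1, or = 1 = w*_1 when p = f).\<close>
fun downc :: "real \<Rightarrow> real \<Rightarrow> nat \<Rightarrow> real \<Rightarrow> real \<Rightarrow> real \<Rightarrow> nat \<Rightarrow> nat \<Rightarrow> real" where
  "downc a b f r y z p 0 =
     (1-a)/(1-b) * wstar b r y z (p-f+2) + (a-b)/(1-b) * wstar b r y z (p-f+1)"
| "downc a b f r y z p (Suc 0) =
     betaba a b r y z * downc a b f r y z p 0
     - xba a b r y z * (if p = f then 1 else wstar b r y z (p-f+1))"
| "downc a b f r y z p (Suc (Suc k)) =
     betac a r y z * downc a b f r y z p (Suc k) - xc a r y z * downc a b f r y z p k"

definition wbar :: "real \<Rightarrow> real \<Rightarrow> nat \<Rightarrow> real \<Rightarrow> real \<Rightarrow> real \<Rightarrow> nat \<Rightarrow> nat \<Rightarrow> real" where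
  "wbar a b f r y z m n =
    (if m < n then
       (if n = m + 1 then 1
        else if n \<le> f then wstar a r y z (n - m)
        else if f \<le> m then wstar b r y z (n - m)
        else upc a b f r y z m (n - f - 1))
     else if n < m then
       (if m = n + 1 then 1
        else if m \<le> f - 1 then wstar a r y z (m - n)
        else if f - 1 \<le> n then wstar b r y z (m - n)
        else downc a b f r y z m (f - 2 - n))
     else undefined)"

definition wbr :: "real \<Rightarrow> real \<Rightarrow> nat \<Rightarrow> real \<Rightarrow> real \<Rightarrow> real \<Rightarrow> nat \<Rightarrow> nat \<Rightarrow> real" where
  "wbr a b f r y z m n =
     wbar a b f r y z m n * wbar a b f r y z (m+1) (n+1)
     - wbar a b f r y z m (n+1) * wbar a b f r y z (m+1) n"

end

theory Submission imports Defs begin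

text \<open>Along a row of \<open>wbar\<close>, the entries beyond column \<open>f + 1\<close> satisfy the three-term
  recurrence with coefficients \<open>betac b\<close>, \<open>xc b\<close>, just as \<open>wstar c\<close> does with \<open>betac c\<close>, \<open>xc c\<close>.
  The Casoratian of two solutions of one such recurrence is geometric with ratio \<open>xc\<close>, so each
  determinant \<open>wbr\<close> is a power of \<open>xc a\<close> or \<open>xc b\<close> times an initial Casoratian, and the
  latter is a polynomial identity in \<open>a, b, r, y, z\<close>.\<close>

lemma three_term_casoratian:
  fixes U V :: "nat \<Rightarrow> 'a::comm_ring_1"
  assumes "\<And>k. U (Suc (Suc k)) = \<beta> * U (Suc k) - x * U k"
      and "\<And>k. V (Suc (Suc k)) = \<beta> * V (Suc k) - x * V k"
  shows "U j * V (Suc j) - U (Suc j) * V j = x ^ j * (U 0 * V 1 - U 1 * V 0)"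
proof (induction j)
  case 0
  then show ?case by simp
next
  case (Suc j)
  have "U (Suc j) * V (Suc (Suc j)) - U (Suc (Suc j)) * V (Suc j)
      = x * (U j * V (Suc j) - U (Suc j) * V j)"
    by (simp add: assms algebra_simps)
  then show ?case
    using Suc by simp
qed

lemma wstar_2: "xc c r y z \<noteq> 0 \<Longrightarrow> wstar c r y z 2 = omc c r y z"
  by (simp add: numeral_2_eq_2)

lemma xc_mult_wstar_initial_casoratian:
  assumes "xc c r y z \<noteq> 0"
  shows "xc c r y z * (1 - wstar c r y z 0 * wstar c r y z 2) = c^2 * r^2 * z^4 * (1-c)^2"
proof -
  have "xc c r y z * (1 - wstar c r y z 0 * wstar c r y z 2)
      = xc c r y z - (betac c r y z - omc c r y z) * omc c r y z"
    using assms by (simp add: wstar_2 field_simps)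
  also have "\<dots> = c^2 * r^2 * z^4 * (1-c)^2"
    unfolding xc_def tauc_def betac_def omc_def by algebra
  finally show ?thesis .
qed

lemma wstar_casoratian:
  assumes "2 \<le> l" "xc c r y z \<noteq> 0"
  shows "wstar c r y z l * wstar c r y z l - wstar c r y z (l+1) * wstar c r y z (l-1)
       = c^2 * r^2 * z^4 * (1-c)^2 * xc c r y z ^ (l-2)"
proof -
  obtain k where l: "l = Suc (Suc k)"
    using assms(1) by (metis add_2_eq_Suc le_Suc_ex)
  have "wstar c r y z l * wstar c r y z l - wstar c r y z (l+1) * wstar c r y z (l-1)
      = - (wstar c r y z (Suc k) * wstar c r y z (Suc (Suc (Suc k)))
           - wstar c r y z (Suc (Suc k)) * wstar c r y z (Suc (Suc k)))"
    unfolding l by simp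
  also have "\<dots> = xc c r y z ^ Suc k * (1 - wstar c r y z 0 * wstar c r y z 2)"
    using three_term_casoratian[of "wstar c r y z" "betac c r y z" "xc c r y z"
        "\<lambda>k. wstar c r y z (Suc k)" "Suc k"]
    by (simp add: numeral_2_eq_2 algebra_simps)
  also have "\<dots> = xc c r y z ^ k * (xc c r y z * (1 - wstar c r y z 0 * wstar c r y z 2))"
    by simp
  finally show ?thesis
    unfolding xc_mult_wstar_initial_casoratian[OF assms(2)] l by simp
qed

lemma wbar_eq_wstar_a: "m < n \<Longrightarrow> n \<le> f \<Longrightarrow> wbar a b f r y z m n = wstar a r y z (n-m)"
  by (simp add: wbar_def)

lemma wbar_eq_wstar_b: "f \<le> m \<Longrightarrow> m < n \<Longrightarrow> wbar a b f r y z m n = wstar b r y z (n-m)"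
  by (auto simp add: wbar_def)

lemma wbar_eq_upc: "m < f \<Longrightarrow> f < n \<Longrightarrow> wbar a b f r y z m n = upc a b f r y z m (n-f-1)"
  by (simp add: wbar_def)

lemma upc_1:
  "m < f \<Longrightarrow> upc a b f r y z m 1 =
     betaab a b r y z * upc a b f r y z m 0 - xab a b r y z * wstar a r y z (f-m)"
  using upc.simps(2)[of a b f r y z m] by (cases "m + 1 = f") auto

lemma upc_casoratian:
  "upc a b f r y z m k * upc a b f r y z m' (Suc k) - upc a b f r y z m (Suc k) * upc a b f r y z m' k
   = xc b r y z ^ k * (upc a b f r y z m 0 * upc a b f r y z m' 1
                      - upc a b f r y z m 1 * upc a b f r y z m' 0)"
  by (rule three_term_casoratian[of _ "betac b r y z"]) simp_all

text \<open>The Casoratian of column \<open>f\<close> (entries \<open>wstar a\<close>) and column \<open>f + 1\<close> (entries \<open>upc \<dots> 0\<close>)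
  on rows \<open>f - l\<close>, \<open>f - l + 1\<close>: column \<open>f + 1\<close> is an affine combination of two shifts of
  \<open>wstar a\<close>, so this reduces to \<open>wstar_casoratian\<close>.\<close>
lemma wstar_upc_casoratian:
  assumes "2 \<le> l" "l \<le> f" "a < 1" "xc a r y z \<noteq> 0"
  shows "wstar a r y z l * upc a b f r y z (f-l+1) 0 - upc a b f r y z (f-l) 0 * wstar a r y z (l-1)
       = a^2 * r^2 * z^4 * (1-a) * (1-b) * xc a r y z ^ (l-2)"
proof -
  define W where "W = wstar a r y z"
  have "f - (f - l) = l" "f - (f - l + 1) = l - 1" "l - 1 + 1 = l"
    using assms by auto
  then have u0: "upc a b f r y z (f-l) 0 = (1-b)/(1-a) * W (l+1) + (b-a)/(1-a) * W l"
        and u1: "upc a b f r y z (f-l+1) 0 = (1-b)/(1-a) * W l + (b-a)/(1-a) * W (l-1)"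
    unfolding W_def by simp_all
  have "W l * upc a b f r y z (f-l+1) 0 - upc a b f r y z (f-l) 0 * W (l-1)
      = (1-b)/(1-a) * (W l * W l - W (l+1) * W (l-1))"
    unfolding u0 u1 by (simp add: algebra_simps)
  also have "\<dots> = (1-b)/(1-a) * (a^2 * r^2 * z^4 * (1-a)^2 * xc a r y z ^ (l-2))"
    unfolding W_def using wstar_casoratian[OF assms(1,4)] by simp
  also have "\<dots> = a^2 * r^2 * z^4 * (1-a) * (1-b) * xc a r y z ^ (l-2)"
    using assms(3) by (simp add: power2_eq_square field_simps)
  finally show ?thesis
    unfolding W_def .
qed

lemma upc_wstar_initial_casoratian:
  assumes "0 < f" "a < 1" "xc a r y z \<noteq> 0" "xc b r y z \<noteq> 0"
  shows "upc a b f r y z (f-1) 0 * wstar b r y z 2 - upc a b f r y z (f-1) 1 * wstar b r y z 1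
       = b^2 * r^2 * z^4 * (1-a) * (1-b)"
proof -
  define U where "U = upc a b f r y z (f-1) 0"
  have "f - (f - 1) = 1" "f - (f - 1) + 1 = 2"
    using assms(1) by auto
  then have "U = ((1-b) * omc a r y z + (b-a)) / (1-a)"
    unfolding U_def using assms(3) by (simp add: wstar_2 add_divide_distrib)
  then have U: "U * (1-a) = (1-b) * omc a r y z + (b-a)"
    using assms(2) by simp
  have "(U * omc b r y z - (betaab a b r y z * U - xab a b r y z)) * (1-a)
      = (U * (1-a)) * (omc b r y z - betaab a b r y z) + xab a b r y z * (1-a)"
    by (simp add: algebra_simps)
  also have "\<dots> = b^2 * r^2 * z^4 * (1-a) * (1-b) * (1-a)"
    unfolding U xab_def tau2_def betaab_def betac_def omc_def by algebra
  finally show ?thesis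
    unfolding U_def using assms upc_1[of "f-1" f a b r y z]
    by (simp add: wstar_2)
qed

lemma wbr_across_f:
  assumes "2 \<le> l" "l \<le> f" "1 \<le> j" "a < 1" "xc a r y z \<noteq> 0"
  shows "wbr a b f r y z (f - l) (f + j) =
           a^2 * r^2 * z^4 * (1-a) * (1-b) * xc a r y z ^ (l - 2) * xab a b r y z
           * xc b r y z ^ (j - 1)"
proof -
  define U where "U = upc a b f r y z (f-l)"
  define V where "V = upc a b f r y z (f-l+1)"
  have "f - (f - l) = l" "f - (f - l + 1) = l - 1"
    using assms by auto
  then have U1: "U 1 = betaab a b r y z * U 0 - xab a b r y z * wstar a r y z l"
       and V1: "V 1 = betaab a b r y z * V 0 - xab a b r y z * wstar a r y z (l-1)"
    unfolding U_def V_def using assms(1,2) upc_1[of "f-l" f] upc_1[of "f-l+1" f] by simp_all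
  have "U 0 * V 1 - U 1 * V 0
      = xab a b r y z * (wstar a r y z l * V 0 - U 0 * wstar a r y z (l-1))"
    unfolding U1 V1 by (simp add: algebra_simps)
  moreover have "wbr a b f r y z (f - l) (f + j) = U (j-1) * V (Suc (j-1)) - U (Suc (j-1)) * V (j-1)"
    unfolding wbr_def U_def V_def using assms(1-3)
    by (simp add: wbar_eq_upc Suc_diff_le)
  ultimately show ?thesis
    unfolding U_def V_def upc_casoratian
    using wstar_upc_casoratian[OF assms(1,2,4,5), of b] by simp
qed

lemma wbr_ending_at_f:
  assumes "2 \<le> l" "l \<le> f" "a < 1" "xc a r y z \<noteq> 0"
  shows "wbr a b f r y z (f - l) f = a^2 * r^2 * z^4 * (1-a) * (1-b) * xc a r y z ^ (l - 2)"
proof -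
  have "wbr a b f r y z (f - l) f = wstar a r y z l * upc a b f r y z (f-l+1) 0
      - upc a b f r y z (f-l) 0 * wstar a r y z (l-1)"
    unfolding wbr_def using assms(1,2) by (simp add: wbar_eq_upc wbar_eq_wstar_a)
  then show ?thesis
    using wstar_upc_casoratian[OF assms] by simp
qed

lemma wbr_from_f_minus_1:
  assumes "1 \<le> j" "0 < f" "a < 1" "xc a r y z \<noteq> 0" "xc b r y z \<noteq> 0"
  shows "wbr a b f r y z (f - 1) (f + j) = b^2 * r^2 * z^4 * (1-a) * (1-b) * xc b r y z ^ (j - 1)"
proof -
  define U where "U = upc a b f r y z (f-1)"
  define V where "V = (\<lambda>k. wstar b r y z (Suc k))"
  have "wbr a b f r y z (f - 1) (f + j) = U (j-1) * V (Suc (j-1)) - U (Suc (j-1)) * V (j-1)"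
    unfolding wbr_def U_def V_def using assms(1,2) by (simp add: wbar_eq_upc wbar_eq_wstar_b)
  also have "\<dots> = xc b r y z ^ (j-1) * (U 0 * V 1 - U 1 * V 0)"
    by (rule three_term_casoratian[of _ "betac b r y z"]) (simp_all add: U_def V_def)
  also have "U 0 * V 1 - U 1 * V 0 = b^2 * r^2 * z^4 * (1-a) * (1-b)"
    unfolding U_def V_def using upc_wstar_initial_casoratian[OF assms(2-5)]
    by (simp add: numeral_2_eq_2)
  finally show ?thesis
    by simp
qed

lemma wbr_below_f:
  assumes "2 \<le> l" "m + l \<le> f - 1" "xc a r y z \<noteq> 0"
  shows "wbr a b f r y z m (m + l) = a^2 * r^2 * z^4 * (1-a)^2 * xc a r y z ^ (l - 2)"
  using assms wstar_casoratian[OF assms(1,3)] by (simp add: wbr_def wbar_eq_wstar_a)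

lemma wbr_above_f:
  assumes "f \<le> m" "2 \<le> j" "xc b r y z \<noteq> 0"
  shows "wbr a b f r y z m (m + j) = b^2 * r^2 * z^4 * (1-b)^2 * xc b r y z ^ (j - 2)"
  using assms wstar_casoratian[OF assms(2,3)] by (simp add: wbr_def wbar_eq_wstar_b)

theorem proposition2:
  fixes a b r y z :: real and f :: nat
  assumes "0 < a" "a < 1" "0 < b" "b < 1" "3 \<le> f"
    and "xc a r y z \<noteq> 0" "xc b r y z \<noteq> 0"
  shows
    "(\<forall>l j. 2 \<le> l \<longrightarrow> l \<le> f \<longrightarrow> 1 \<le> j \<longrightarrow>
        wbr a b f r y z (f - l) (f + j) =
          a^2 * r^2 * z^4 * (1-a) * (1-b) * xc a r y z ^ (l - 2) * xab a b r y z
          * xc b r y z ^ (j - 1))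
   \<and> (\<forall>l. 2 \<le> l \<longrightarrow> l \<le> f \<longrightarrow>
        wbr a b f r y z (f - l) f = a^2 * r^2 * z^4 * (1-a) * (1-b) * xc a r y z ^ (l - 2))
   \<and> (\<forall>j. 1 \<le> j \<longrightarrow>
        wbr a b f r y z (f - 1) (f + j) = b^2 * r^2 * z^4 * (1-a) * (1-b) * xc b r y z ^ (j - 1))
   \<and> (\<forall>m l. 2 \<le> l \<longrightarrow> m + l \<le> f - 1 \<longrightarrow>
        wbr a b f r y z m (m + l) = a^2 * r^2 * z^4 * (1-a)^2 * xc a r y z ^ (l - 2))
   \<and> (\<forall>m j. f \<le> m \<longrightarrow> 2 \<le> j \<longrightarrow>
        wbr a b f r y z m (m + j) = b^2 * r^2 * z^4 * (1-b)^2 * xc b r y z ^ (j - 2))"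
  using assms
  by (intro conjI allI impI wbr_across_f wbr_ending_at_f wbr_from_f_minus_1 wbr_below_f
      wbr_above_f) auto

end
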